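(* Let $G_1$, $G_2$ be graphs. Then $G_1$ and $G_2$ have the same spectra with respect to $A$ and with respect to $\bar A$ if and only if $G_1^*$ and $G_2^*$ have the same spectra with respect to $A$ and with respect to $\bar A$; and the same holds with $A,\bar A$ replaced by $|L|, \overline{|L|}$. Similarly, $\phi_{ADJ}^{G_1}=\phi_{ADJ}^{G_2}$ if and only if $\phi_{ADJ}^{G_1^*}=\phi_{ADJ}^{G_2^*}$.
   Context: Graphs are finite and simple. For a graph, $A$ and $D$ are its adjacency and degree matrices, $|L| = D+A$ is its signless Laplacian; $\bar A$ and $\overline{|L|}$ denote the adjacency matrix and signless Laplacian of its complement. The cone $G^*$ is the join of $G$ with a single vertex, i.e., $G$ plus a new vertex adjacent to all vertices of $G$. The generalized characteristic polynomial of $G$ is $\phi^G_{ADJ}(\lambda,x,y)=\det(\lambda I - A + xD + yJ)$, where $J$ is the all-ones matrix. *)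

theory Defs
  imports "Jordan_Normal_Form.Determinant" "Jordan_Normal_Form.Char_Poly"
begin

text \<open>A finite simple graph on vertex set {0..<n} is given by its order n and an
  edge relation E that is symmetric and irreflexive on {0..<n}
  (values of E outside {0..<n} are irrelevant).\<close>

definition is_graph :: "nat \<Rightarrow> (nat \<Rightarrow> nat \<Rightarrow> bool) \<Rightarrow> bool" where
  "is_graph n E \<longleftrightarrow> (\<forall>i<n. \<forall>j<n. (E i j \<longleftrightarrow> E j i) \<and> \<not> E i i)"

definition compl_graph :: "(nat \<Rightarrow> nat \<Rightarrow> bool) \<Rightarrow> nat \<Rightarrow> nat \<Rightarrow> bool" where
  "compl_graph E i j \<longleftrightarrow> i \<noteq> j \<and> \<not> E i j"

definition cone_graph :: "nat \<Rightarrow> (nat \<Rightarrow> nat \<Rightarrow> bool) \<Rightarrow> nat \<Rightarrow> nat \<Rightarrow> bool" where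
  "cone_graph n E i j \<longleftrightarrow> (i < n \<and> j < n \<and> E i j) \<or> (i = n \<and> j < n) \<or> (i < n \<and> j = n)"

definition adj_mat :: "nat \<Rightarrow> (nat \<Rightarrow> nat \<Rightarrow> bool) \<Rightarrow> real mat" where
  "adj_mat n E = mat n n (\<lambda>(i,j). if E i j then 1 else 0)"

definition degree :: "nat \<Rightarrow> (nat \<Rightarrow> nat \<Rightarrow> bool) \<Rightarrow> nat \<Rightarrow> nat" where
  "degree n E i = card {j. j < n \<and> E i j}"

definition deg_mat :: "nat \<Rightarrow> (nat \<Rightarrow> nat \<Rightarrow> bool) \<Rightarrow> real mat" where
  "deg_mat n E = mat n n (\<lambda>(i,j). if i = j then real (degree n E i) else 0)"

definition signless_lap :: "nat \<Rightarrow> (nat \<Rightarrow> nat \<Rightarrow> bool) \<Rightarrow> real mat" where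
  "signless_lap n E = deg_mat n E + adj_mat n E"

definition ones_mat :: "nat \<Rightarrow> real mat" where
  "ones_mat n = mat n n (\<lambda>_. 1)"

definition gen_char_poly :: "nat \<Rightarrow> (nat \<Rightarrow> nat \<Rightarrow> bool) \<Rightarrow> real \<Rightarrow> real \<Rightarrow> real \<Rightarrow> real" where
  "gen_char_poly n E lam x y =
     det (lam \<cdot>\<^sub>m 1\<^sub>m n - adj_mat n E + x \<cdot>\<^sub>m deg_mat n E + y \<cdot>\<^sub>m ones_mat n)"

text \<open>Two matrices have the same spectrum (eigenvalues with multiplicities) iff they
  have the same characteristic polynomial.\<close>
definition cospectral :: "real mat \<Rightarrow> real mat \<Rightarrow> bool" where
  "cospectral M N \<longleftrightarrow> char_poly M = char_poly N"

end

theory Submission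
  imports Defs
begin

text \<open>Bordering a square matrix gives \<open>det [[M, a 1], [b 1\<^sup>T, c]] = a b \<tau>(M) + c det M\<close>
  with \<open>\<tau>(M) = -1\<^sup>T adj(M) 1\<close>, and \<open>det (M - t J) = det M + t \<tau>(M)\<close>. Hence the
  characteristic polynomials of the cone and of the complement of a graph are both expressed
  through \<open>q(y) = det (y I - M)\<close> and \<open>t(y) = \<tau>(y I - M)\<close>, for \<open>M = A\<close> or \<open>M = |L|\<close>,
  while the complement of the cone is the complement plus an isolated vertex. Both the spectra
  of the graph and its complement and those of the two cones determine \<open>q\<close> and \<open>t\<close> by linear
  elimination, the latter except at one value of \<open>y\<close>, which does not matter for polynomials.
  The same elimination, applied to \<open>det\<close> and \<open>\<tau>\<close> of \<open>\<lambda> I - A + x D\<close>, handles the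
  generalized characteristic polynomial.\<close>

definition border_mat :: "'a::comm_ring_1 mat \<Rightarrow> 'a \<Rightarrow> 'a \<Rightarrow> 'a \<Rightarrow> 'a mat" where
  "border_mat M a b c = mat (Suc (dim_row M)) (Suc (dim_row M))
     (\<lambda>(i,j). if i < dim_row M then (if j < dim_row M then M $$ (i,j) else a)
             else (if j < dim_row M then b else c))"

lemma border_mat_carrier: "M \<in> carrier_mat n n \<Longrightarrow> border_mat M a b c \<in> carrier_mat (Suc n) (Suc n)"
  unfolding border_mat_def by auto

lemma mat_delete_border_mat_corner:
  "M \<in> carrier_mat n n \<Longrightarrow> mat_delete (border_mat M a b c) n n = M"
  unfolding mat_delete_def border_mat_def by (intro eq_matI) auto

lemma det_border_mat_last_row:
  assumes M: "M \<in> carrier_mat n n"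
  shows "det (border_mat M a b c) = b * det (border_mat M a 1 0) + c * det M"
proof -
  have del: "mat_delete (border_mat M a b' c') n j = mat_delete (border_mat M a 1 0) n j"
    if "j < n" for b' c' j
    unfolding mat_delete_def border_mat_def using M that by (intro eq_matI) auto
  have entry: "border_mat M a b' c' $$ (n,j) = (if j < n then b' else c')" if "j < Suc n" for b' c' j
    using M that by (simp add: border_mat_def)
  have expand: "det (border_mat M a b' c') =
      (\<Sum>j<n. b' * cofactor (border_mat M a 1 0) n j) + c' * det M" for b' c'
  proof -
    have "det (border_mat M a b' c') =
        (\<Sum>j<Suc n. border_mat M a b' c' $$ (n,j) * cofactor (border_mat M a b' c') n j)"
      by (rule laplace_expansion_row[OF border_mat_carrier[OF M]]) simp
    also have "\<dots> = (\<Sum>j<n. b' * cofactor (border_mat M a 1 0) n j) + c' * det M"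
      using M del[where b'=b' and c'=c'] entry[where b'=b' and c'=c']
      by (simp add: cofactor_def mat_delete_border_mat_corner flip: mult_2)
    finally show ?thesis .
  qed
  show ?thesis using expand[of b c] expand[of 1 0] by (simp add: sum_distrib_left)
qed

lemma det_border_mat_last_col:
  assumes M: "M \<in> carrier_mat n n"
  shows "det (border_mat M a b c) = a * det (border_mat M 1 b 0) + c * det M"
proof -
  have del: "mat_delete (border_mat M a' b c') i n = mat_delete (border_mat M 1 b 0) i n"
    if "i < n" for a' c' i
    unfolding mat_delete_def border_mat_def using M that by (intro eq_matI) auto
  have entry: "border_mat M a' b c' $$ (i,n) = (if i < n then a' else c')" if "i < Suc n" for a' c' i
    using M that by (simp add: border_mat_def)
  have expand: "det (border_mat M a' b c') =
      (\<Sum>i<n. a' * cofactor (border_mat M 1 b 0) i n) + c' * det M" for a' c'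
  proof -
    have "det (border_mat M a' b c') =
        (\<Sum>i<Suc n. border_mat M a' b c' $$ (i,n) * cofactor (border_mat M a' b c') i n)"
      by (rule laplace_expansion_column[OF border_mat_carrier[OF M]]) simp
    also have "\<dots> = (\<Sum>i<n. a' * cofactor (border_mat M 1 b 0) i n) + c' * det M"
      using M del[where a'=a' and c'=c'] entry[where a'=a' and c'=c']
      by (simp add: cofactor_def mat_delete_border_mat_corner flip: mult_2)
    finally show ?thesis .
  qed
  show ?thesis using expand[of a c] expand[of 1 0] by (simp add: sum_distrib_left)
qed

text \<open>This is \<open>\<tau>(M) = -1\<^sup>T adj(M) 1\<close>.\<close>
definition ones_bordered_det :: "'a::comm_ring_1 mat \<Rightarrow> 'a" where
  "ones_bordered_det M = det (border_mat M 1 1 0)"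

lemma det_border_mat:
  assumes "M \<in> carrier_mat n n"
  shows "det (border_mat M a b c) = a * b * ones_bordered_det M + c * det M"
  using det_border_mat_last_row[OF assms, of a b c] det_border_mat_last_col[OF assms, of a 1 0]
  unfolding ones_bordered_det_def by (simp add: algebra_simps)

lemma det_uminus_mat:
  assumes "(X :: 'a::comm_ring_1 mat) \<in> carrier_mat n n"
  shows "det (- X) = (-1)^n * det X"
proof -
  have "- X = (-1) \<cdot>\<^sub>m X" using assms by (intro eq_matI) auto
  thus ?thesis using assms by simp
qed

lemma ones_bordered_det_uminus:
  assumes M: "M \<in> carrier_mat n n"
  shows "ones_bordered_det (- M) = - ((-1)^n * ones_bordered_det M)"
proof -
  have "border_mat (- M) (-1) (-1) 0 = - border_mat M 1 1 0"
    using M by (intro eq_matI) (auto simp: border_mat_def)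
  hence "det (border_mat (- M) (-1) (-1) 0) = (-1)^Suc n * ones_bordered_det M"
    unfolding ones_bordered_det_def by (simp add: det_uminus_mat[OF border_mat_carrier[OF M]])
  thus ?thesis using det_border_mat[of "- M" n "-1" "-1" 0] M by simp
qed

lemma ones_mat_carrier [simp]:
  "dim_row (ones_mat n) = n" "dim_col (ones_mat n) = n" "ones_mat n \<in> carrier_mat n n"
  by (auto simp: ones_mat_def)

text \<open>The left factor adds the last row \<open>t 1\<^sup>T\<close> of the right factor to each of its other rows;
  both factors are block triangular.\<close>
lemma border_mat_minus_smult_ones_factor:
  assumes M: "M \<in> carrier_mat n n"
  shows "border_mat (1\<^sub>m n) 1 0 1 * border_mat (M - t \<cdot>\<^sub>m ones_mat n) 0 t 1 = border_mat M 1 t 1"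
proof (rule eq_matI)
  let ?L = "border_mat (1\<^sub>m n) 1 0 1" and ?R = "border_mat (M - t \<cdot>\<^sub>m ones_mat n) 0 t 1"
  fix i j assume "i < dim_row (border_mat M 1 t 1)" and "j < dim_col (border_mat M 1 t 1)"
  hence i: "i < Suc n" and j: "j < Suc n" using M by (auto simp: border_mat_def)
  have "(?L * ?R) $$ (i,j) = (\<Sum>k<n. ?L $$ (i,k) * ?R $$ (k,j)) + ?L $$ (i,n) * ?R $$ (n,j)"
    using i j M by (simp add: border_mat_def scalar_prod_def atLeast0LessThan)
  also have "\<dots> = border_mat M 1 t 1 $$ (i,j)"
  proof (cases "i < n")
    case True
    have "(\<Sum>k<n. ?L $$ (i,k) * ?R $$ (k,j)) = (\<Sum>k<n. if k = i then ?R $$ (i,j) else 0)"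
      using True M by (intro sum.cong) (auto simp: border_mat_def)
    thus ?thesis using True j M by (auto simp: border_mat_def ones_mat_def)
  next
    case False
    thus ?thesis using i j M by (auto simp: border_mat_def ones_mat_def)
  qed
  finally show "(?L * ?R) $$ (i,j) = border_mat M 1 t 1 $$ (i,j)" .
qed (use M in \<open>auto simp: border_mat_def\<close>)

lemma det_minus_smult_ones:
  assumes M: "M \<in> carrier_mat n n"
  shows "det (M - t \<cdot>\<^sub>m ones_mat n) = det M + t * ones_bordered_det M"
proof -
  have MJ: "M - t \<cdot>\<^sub>m ones_mat n \<in> carrier_mat n n" using M by auto
  have "det M + t * ones_bordered_det M = det (border_mat M 1 t 1)"
    using det_border_mat[OF M, of 1 t 1] by simp
  also have "\<dots> = det (border_mat (1\<^sub>m n) 1 0 1) * det (border_mat (M - t \<cdot>\<^sub>m ones_mat n) 0 t 1)"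
    unfolding border_mat_minus_smult_ones_factor[OF M, symmetric]
    by (rule det_mult[of _ "Suc n"]) (auto intro!: border_mat_carrier MJ)
  also have "\<dots> = det (M - t \<cdot>\<^sub>m ones_mat n)"
    using det_border_mat[OF MJ, of 0 t 1] det_border_mat[of "1\<^sub>m n :: real mat" n 1 0 1] by simp
  finally show ?thesis by simp
qed

lemma ones_bordered_det_minus_smult_ones:
  assumes M: "M \<in> carrier_mat n n"
  shows "ones_bordered_det (M - y \<cdot>\<^sub>m ones_mat n) = ones_bordered_det M"
proof -
  have MJ: "M - y \<cdot>\<^sub>m ones_mat n \<in> carrier_mat n n" using M by auto
  have "M - y \<cdot>\<^sub>m ones_mat n - 1 \<cdot>\<^sub>m ones_mat n = M - (y + 1) \<cdot>\<^sub>m ones_mat n"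
    using M by (intro eq_matI) (auto simp: ones_mat_def)
  thus ?thesis using det_minus_smult_ones[OF MJ, of 1] det_minus_smult_ones[OF M]
    by (simp add: algebra_simps)
qed

lemma det_uminus_minus_ones:
  assumes X: "X \<in> carrier_mat n n"
  shows "det (- X - 1 \<cdot>\<^sub>m ones_mat n) = (-1)^n * (det X - ones_bordered_det X)"
  using det_minus_smult_ones[of "- X" n 1] det_uminus_mat[OF X] ones_bordered_det_uminus[OF X] X
  by (simp add: algebra_simps)

lemma poly_char_poly_eq_det:
  assumes "(A :: 'a::field mat) \<in> carrier_mat n n"
  shows "poly (char_poly A) y = det (y \<cdot>\<^sub>m 1\<^sub>m n - A)"
proof -
  have "- char_matrix A y = y \<cdot>\<^sub>m 1\<^sub>m n - A"
    using assms unfolding char_matrix_def by (intro eq_matI) auto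
  thus ?thesis using char_poly_matrix[OF assms] by simp
qed

lemma cospectral_dim_eq:
  assumes "cospectral A B" and "A \<in> carrier_mat n n" and "B \<in> carrier_mat m m"
  shows "n = m"
  using assms degree_monic_char_poly[OF assms(2)] degree_monic_char_poly[OF assms(3)]
  unfolding cospectral_def by simp

lemma poly_eqI_except:
  fixes p q :: "'a::{idom,ring_char_0} poly"
  assumes "\<And>y. y \<noteq> y0 \<Longrightarrow> poly p y = poly q y"
  shows "p = q"
proof (rule ccontr)
  assume "p \<noteq> q"
  hence "finite {y. poly (p - q) y = 0}" by (intro poly_roots_finite) simp
  moreover have "UNIV - {y0} \<subseteq> {y. poly (p - q) y = 0}" using assms by auto
  ultimately have "finite (UNIV :: 'a set)" by (metis finite_Diff2 finite.emptyI finite_insert finite_subset)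
  thus False using infinite_UNIV_char_0 by blast
qed

text \<open>The polynomials \<open>pG, pK, pC, pKC\<close> play the characteristic polynomials of a graph, of its
  complement, of its cone and of the complement of its cone, expressed through \<open>q y = det (y I - M)\<close>
  and \<open>t y = \<tau>(y I - M)\<close> for the relevant matrix \<open>M\<close> of the graph.\<close>
lemma char_poly_pair_cone_iff:
  fixes pG pG' pK pK' pC pC' pKC pKC' :: "real poly" and q q' t t' :: "real \<Rightarrow> real"
  assumes s_nonzero: "s \<noteq> 0"
    and G: "\<And>y. poly pG y = q y" and G': "\<And>y. poly pG' y = q' y"
    and K: "\<And>y. poly pK y = s * (q (c - y) - t (c - y))"
    and K': "\<And>y. poly pK' y = s * (q' (c - y) - t' (c - y))"
    and C: "\<And>y. poly pC y = (y - a) * q (y - b) + t (y - b)"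
    and C': "\<And>y. poly pC' y = (y - a) * q' (y - b) + t' (y - b)"
    and KC: "\<And>y. poly pKC y = y * poly pK y"
    and KC': "\<And>y. poly pKC' y = y * poly pK' y"
  shows "(pG = pG' \<and> pK = pK') \<longleftrightarrow> (pC = pC' \<and> pKC = pKC')"
proof -
  have compl_iff: "pK = pK' \<longleftrightarrow> (\<forall>z. q z - t z = q' z - t' z)"
  proof
    assume "pK = pK'"
    hence "s * (q z - t z) = s * (q' z - t' z)" for z
      using K[of "c - z"] K'[of "c - z"] by auto
    thus "\<forall>z. q z - t z = q' z - t' z" using s_nonzero by simp
  qed (auto intro: poly_eqI_except simp: K K')
  have compl_cone_iff: "pKC = pKC' \<longleftrightarrow> pK = pK'"
    by (metis KC KC' mult_cancel_left poly_eqI_except)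
  show ?thesis
  proof
    assume "pG = pG' \<and> pK = pK'"
    moreover from this have q: "q z = q' z" for z using G G' by metis
    moreover from calculation have "t z = t' z" for z using compl_iff q[of z] by force
    ultimately show "pC = pC' \<and> pKC = pKC'"
      using compl_cone_iff by (auto intro: poly_eqI_except simp: C C')
  next
    assume cones: "pC = pC' \<and> pKC = pKC'"
    hence diff: "q w - t w = q' w - t' w" for w using compl_iff compl_cone_iff by blast
    have cone: "(w + b - a) * q w + t w = (w + b - a) * q' w + t' w" for w
      using C[of "w + b"] C'[of "w + b"] cones by simp
    have scaled: "(w + b - a + 1) * q w = (w + b - a + 1) * q' w" for w
      using cone[of w] diff[of w] by (simp add: algebra_simps)
    have "q w = q' w" if "w \<noteq> a - b - 1" for w using scaled[of w] that by auto
    hence "pG = pG'" by (intro poly_eqI_except[of "a - b - 1"]) (simp add: G G')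
    with cones compl_cone_iff show "pG = pG' \<and> pK = pK'" by simp
  qed
qed

lemma graph_mat_carrier [simp]:
  "adj_mat n E \<in> carrier_mat n n" "deg_mat n E \<in> carrier_mat n n" "signless_lap n E \<in> carrier_mat n n"
  by (auto simp: adj_mat_def deg_mat_def signless_lap_def)

lemma degree_cone_base: "i < n \<Longrightarrow> degree (Suc n) (cone_graph n E) i = Suc (degree n E i)"
proof -
  assume "i < n"
  hence "{j. j < Suc n \<and> cone_graph n E i j} = insert n {j. j < n \<and> E i j}"
    by (auto simp: cone_graph_def)
  thus ?thesis unfolding degree_def by simp
qed

lemma degree_cone_apex: "degree (Suc n) (cone_graph n E) n = n"
proof -
  have "{j. j < Suc n \<and> cone_graph n E n j} = {..<n}" by (auto simp: cone_graph_def)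
  thus ?thesis unfolding degree_def by simp
qed

lemma degree_compl:
  assumes g: "is_graph n E" and i: "i < n"
  shows "real (degree n (compl_graph E) i) = real n - 1 - real (degree n E i)"
proof -
  let ?N = "{j. j < n \<and> E i j}"
  have "{j. j < n \<and> compl_graph E i j} = ({..<n} - ?N) - {i}"
    by (auto simp: compl_graph_def)
  moreover have "i \<in> {..<n} - ?N" using g i by (auto simp: is_graph_def)
  moreover have "card ?N < n"
    using psubset_card_mono[of "{..<n}" ?N] g i by (fastforce simp: is_graph_def)
  moreover have "card ({..<n} - ?N) = n - card ?N" by (subst card_Diff_subset) auto
  ultimately show ?thesis unfolding degree_def by (simp add: of_nat_diff)
qed

lemma degree_compl_cone_base:
  "i < n \<Longrightarrow> degree (Suc n) (compl_graph (cone_graph n E)) i = degree n (compl_graph E) i"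
proof -
  assume "i < n"
  hence "{j. j < Suc n \<and> compl_graph (cone_graph n E) i j} = {j. j < n \<and> compl_graph E i j}"
    by (auto simp: cone_graph_def compl_graph_def)
  thus ?thesis unfolding degree_def by simp
qed

lemma degree_compl_cone_apex: "degree (Suc n) (compl_graph (cone_graph n E)) n = 0"
proof -
  have "{j. j < Suc n \<and> compl_graph (cone_graph n E) n j} = {}"
    by (auto simp: cone_graph_def compl_graph_def)
  thus ?thesis unfolding degree_def by simp
qed

lemma smult_one_minus_adj_mat_cone:
  "y \<cdot>\<^sub>m 1\<^sub>m (Suc n) - adj_mat (Suc n) (cone_graph n E) = border_mat (y \<cdot>\<^sub>m 1\<^sub>m n - adj_mat n E) (-1) (-1) y"
  by (intro eq_matI) (auto simp: border_mat_def adj_mat_def cone_graph_def)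

lemma smult_one_minus_adj_mat_compl:
  assumes "is_graph n E"
  shows "y \<cdot>\<^sub>m 1\<^sub>m n - adj_mat n (compl_graph E)
    = - ((-1 - y) \<cdot>\<^sub>m 1\<^sub>m n - adj_mat n E) - 1 \<cdot>\<^sub>m ones_mat n"
  using assms by (intro eq_matI) (auto simp: adj_mat_def compl_graph_def ones_mat_def is_graph_def)

lemma smult_one_minus_adj_mat_compl_cone:
  "y \<cdot>\<^sub>m 1\<^sub>m (Suc n) - adj_mat (Suc n) (compl_graph (cone_graph n E))
    = border_mat (y \<cdot>\<^sub>m 1\<^sub>m n - adj_mat n (compl_graph E)) 0 0 y"
  by (intro eq_matI) (auto simp: border_mat_def adj_mat_def cone_graph_def compl_graph_def)

lemma smult_one_minus_signless_lap_cone: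
  "y \<cdot>\<^sub>m 1\<^sub>m (Suc n) - signless_lap (Suc n) (cone_graph n E)
    = border_mat ((y - 1) \<cdot>\<^sub>m 1\<^sub>m n - signless_lap n E) (-1) (-1) (y - real n)"
  by (intro eq_matI) (auto simp: border_mat_def adj_mat_def deg_mat_def signless_lap_def cone_graph_def
      degree_cone_base degree_cone_apex dest: less_antisym)

lemma smult_one_minus_signless_lap_compl:
  assumes "is_graph n E"
  shows "y \<cdot>\<^sub>m 1\<^sub>m n - signless_lap n (compl_graph E)
    = - ((real n - 2 - y) \<cdot>\<^sub>m 1\<^sub>m n - signless_lap n E) - 1 \<cdot>\<^sub>m ones_mat n"
  using assms by (intro eq_matI) (auto simp: adj_mat_def deg_mat_def signless_lap_def compl_graph_def
      ones_mat_def is_graph_def degree_compl)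

lemma smult_one_minus_signless_lap_compl_cone:
  "y \<cdot>\<^sub>m 1\<^sub>m (Suc n) - signless_lap (Suc n) (compl_graph (cone_graph n E))
    = border_mat (y \<cdot>\<^sub>m 1\<^sub>m n - signless_lap n (compl_graph E)) 0 0 y"
  by (intro eq_matI) (auto simp: border_mat_def adj_mat_def deg_mat_def signless_lap_def cone_graph_def
      compl_graph_def degree_compl_cone_base degree_compl_cone_apex dest: less_antisym)

lemma smult_one_minus_mat_carrier [simp]:
  "M \<in> carrier_mat n n \<Longrightarrow> y \<cdot>\<^sub>m 1\<^sub>m n - M \<in> carrier_mat n n"
  by auto

lemma poly_char_poly_adj_mat_cone:
  "poly (char_poly (adj_mat (Suc n) (cone_graph n E))) y
    = y * det (y \<cdot>\<^sub>m 1\<^sub>m n - adj_mat n E) + ones_bordered_det (y \<cdot>\<^sub>m 1\<^sub>m n - adj_mat n E)"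
  by (simp add: poly_char_poly_eq_det[of _ "Suc n"] smult_one_minus_adj_mat_cone det_border_mat[of _ n])

lemma poly_char_poly_adj_mat_compl:
  assumes "is_graph n E"
  shows "poly (char_poly (adj_mat n (compl_graph E))) y
    = (-1)^n * (det ((-1 - y) \<cdot>\<^sub>m 1\<^sub>m n - adj_mat n E) - ones_bordered_det ((-1 - y) \<cdot>\<^sub>m 1\<^sub>m n - adj_mat n E))"
  by (simp add: poly_char_poly_eq_det[of _ n] smult_one_minus_adj_mat_compl[OF assms] det_uminus_minus_ones)

lemma poly_char_poly_adj_mat_compl_cone:
  "poly (char_poly (adj_mat (Suc n) (compl_graph (cone_graph n E)))) y
    = y * poly (char_poly (adj_mat n (compl_graph E))) y"
  by (simp add: poly_char_poly_eq_det[of _ "Suc n"] poly_char_poly_eq_det[of _ n]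
      smult_one_minus_adj_mat_compl_cone det_border_mat[of _ n])

lemma poly_char_poly_signless_lap_cone:
  "poly (char_poly (signless_lap (Suc n) (cone_graph n E))) y
    = (y - real n) * det ((y - 1) \<cdot>\<^sub>m 1\<^sub>m n - signless_lap n E)
      + ones_bordered_det ((y - 1) \<cdot>\<^sub>m 1\<^sub>m n - signless_lap n E)"
  by (simp add: poly_char_poly_eq_det[of _ "Suc n"] smult_one_minus_signless_lap_cone det_border_mat[of _ n])

lemma poly_char_poly_signless_lap_compl:
  assumes "is_graph n E"
  shows "poly (char_poly (signless_lap n (compl_graph E))) y
    = (-1)^n * (det ((real n - 2 - y) \<cdot>\<^sub>m 1\<^sub>m n - signless_lap n E)
                - ones_bordered_det ((real n - 2 - y) \<cdot>\<^sub>m 1\<^sub>m n - signless_lap n E))"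
  by (simp add: poly_char_poly_eq_det[of _ n] smult_one_minus_signless_lap_compl[OF assms] det_uminus_minus_ones)

lemma poly_char_poly_signless_lap_compl_cone:
  "poly (char_poly (signless_lap (Suc n) (compl_graph (cone_graph n E)))) y
    = y * poly (char_poly (signless_lap n (compl_graph E))) y"
  by (simp add: poly_char_poly_eq_det[of _ "Suc n"] poly_char_poly_eq_det[of _ n]
      smult_one_minus_signless_lap_compl_cone det_border_mat[of _ n])

lemma cospectral_adj_mat_cone_iff:
  assumes g1: "is_graph n1 E1" and g2: "is_graph n2 E2"
  shows "(cospectral (adj_mat n1 E1) (adj_mat n2 E2) \<and>
          cospectral (adj_mat n1 (compl_graph E1)) (adj_mat n2 (compl_graph E2)))
     \<longleftrightarrow> (cospectral (adj_mat (Suc n1) (cone_graph n1 E1)) (adj_mat (Suc n2) (cone_graph n2 E2)) \<and>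
          cospectral (adj_mat (Suc n1) (compl_graph (cone_graph n1 E1)))
                     (adj_mat (Suc n2) (compl_graph (cone_graph n2 E2))))"
proof (cases "n1 = n2")
  case True
  with g2 have g2': "is_graph n1 E2" by simp
  show ?thesis unfolding cospectral_def True[symmetric]
    by (rule char_poly_pair_cone_iff[where s="(-1)^n1" and a=0 and b=0 and c="-1"
        and q="\<lambda>y. det (y \<cdot>\<^sub>m 1\<^sub>m n1 - adj_mat n1 E1)" and t="\<lambda>y. ones_bordered_det (y \<cdot>\<^sub>m 1\<^sub>m n1 - adj_mat n1 E1)"
        and q'="\<lambda>y. det (y \<cdot>\<^sub>m 1\<^sub>m n1 - adj_mat n1 E2)" and t'="\<lambda>y. ones_bordered_det (y \<cdot>\<^sub>m 1\<^sub>m n1 - adj_mat n1 E2)"])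
      (simp_all add: poly_char_poly_eq_det[of _ n1] poly_char_poly_adj_mat_cone
          poly_char_poly_adj_mat_compl[OF g1] poly_char_poly_adj_mat_compl[OF g2'] poly_char_poly_adj_mat_compl_cone)
next
  case False
  thus ?thesis using cospectral_dim_eq graph_mat_carrier(1) by (metis Suc_inject)
qed

lemma cospectral_signless_lap_cone_iff:
  assumes g1: "is_graph n1 E1" and g2: "is_graph n2 E2"
  shows "(cospectral (signless_lap n1 E1) (signless_lap n2 E2) \<and>
          cospectral (signless_lap n1 (compl_graph E1)) (signless_lap n2 (compl_graph E2)))
     \<longleftrightarrow> (cospectral (signless_lap (Suc n1) (cone_graph n1 E1)) (signless_lap (Suc n2) (cone_graph n2 E2)) \<and>
          cospectral (signless_lap (Suc n1) (compl_graph (cone_graph n1 E1)))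
                     (signless_lap (Suc n2) (compl_graph (cone_graph n2 E2))))"
proof (cases "n1 = n2")
  case True
  with g2 have g2': "is_graph n1 E2" by simp
  show ?thesis unfolding cospectral_def True[symmetric]
    by (rule char_poly_pair_cone_iff[where s="(-1)^n1" and a="real n1" and b=1 and c="real n1 - 2"
        and q="\<lambda>y. det (y \<cdot>\<^sub>m 1\<^sub>m n1 - signless_lap n1 E1)" and t="\<lambda>y. ones_bordered_det (y \<cdot>\<^sub>m 1\<^sub>m n1 - signless_lap n1 E1)"
        and q'="\<lambda>y. det (y \<cdot>\<^sub>m 1\<^sub>m n1 - signless_lap n1 E2)" and t'="\<lambda>y. ones_bordered_det (y \<cdot>\<^sub>m 1\<^sub>m n1 - signless_lap n1 E2)"])
      (simp_all add: poly_char_poly_eq_det[of _ n1] poly_char_poly_signless_lap_cone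
          poly_char_poly_signless_lap_compl[OF g1] poly_char_poly_signless_lap_compl[OF g2']
          poly_char_poly_signless_lap_compl_cone)
next
  case False
  thus ?thesis using cospectral_dim_eq graph_mat_carrier(3) by (metis Suc_inject)
qed

definition gen_char_mat :: "nat \<Rightarrow> (nat \<Rightarrow> nat \<Rightarrow> bool) \<Rightarrow> real \<Rightarrow> real \<Rightarrow> real mat" where
  "gen_char_mat n E lam x = lam \<cdot>\<^sub>m 1\<^sub>m n - adj_mat n E + x \<cdot>\<^sub>m deg_mat n E"

lemma gen_char_mat_carrier [simp]: "gen_char_mat n E lam x \<in> carrier_mat n n"
  by (auto simp: gen_char_mat_def)

lemma gen_char_poly_eq_det_gen_char_mat:
  "gen_char_poly n E lam x y = det (gen_char_mat n E lam x) - y * ones_bordered_det (gen_char_mat n E lam x)"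
proof -
  have "lam \<cdot>\<^sub>m 1\<^sub>m n - adj_mat n E + x \<cdot>\<^sub>m deg_mat n E + y \<cdot>\<^sub>m ones_mat n
      = gen_char_mat n E lam x - (-y) \<cdot>\<^sub>m ones_mat n"
    by (intro eq_matI) (auto simp: gen_char_mat_def adj_mat_def deg_mat_def ones_mat_def)
  thus ?thesis unfolding gen_char_poly_def by (simp add: det_minus_smult_ones)
qed

lemma gen_char_poly_eq_poly_char_poly:
  "gen_char_poly n E lam x y = poly (char_poly (adj_mat n E - x \<cdot>\<^sub>m deg_mat n E - y \<cdot>\<^sub>m ones_mat n)) lam"
proof -
  have "lam \<cdot>\<^sub>m 1\<^sub>m n - adj_mat n E + x \<cdot>\<^sub>m deg_mat n E + y \<cdot>\<^sub>m ones_mat n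
      = lam \<cdot>\<^sub>m 1\<^sub>m n - (adj_mat n E - x \<cdot>\<^sub>m deg_mat n E - y \<cdot>\<^sub>m ones_mat n)"
    by (intro eq_matI) (auto simp: adj_mat_def deg_mat_def ones_mat_def)
  moreover have "adj_mat n E - x \<cdot>\<^sub>m deg_mat n E - y \<cdot>\<^sub>m ones_mat n \<in> carrier_mat n n" by auto
  ultimately show ?thesis unfolding gen_char_poly_def by (simp add: poly_char_poly_eq_det)
qed

lemma gen_char_poly_cone:
  "gen_char_poly (Suc n) (cone_graph n E) lam x y =
     (y - 1)^2 * ones_bordered_det (gen_char_mat n E (lam + x) x)
     + (lam + x * real n + y) * gen_char_poly n E (lam + x) x y"
proof -
  let ?M = "gen_char_mat n E (lam + x) x"
  have "lam \<cdot>\<^sub>m 1\<^sub>m (Suc n) - adj_mat (Suc n) (cone_graph n E) + x \<cdot>\<^sub>m deg_mat (Suc n) (cone_graph n E)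
        + y \<cdot>\<^sub>m ones_mat (Suc n)
      = border_mat (?M - (-y) \<cdot>\<^sub>m ones_mat n) (y - 1) (y - 1) (lam + x * real n + y)"
    by (intro eq_matI) (auto simp: border_mat_def gen_char_mat_def adj_mat_def deg_mat_def ones_mat_def
        cone_graph_def degree_cone_base degree_cone_apex algebra_simps dest: less_antisym)
  hence "gen_char_poly (Suc n) (cone_graph n E) lam x y
      = (y - 1)^2 * ones_bordered_det (?M - (-y) \<cdot>\<^sub>m ones_mat n)
        + (lam + x * real n + y) * det (?M - (-y) \<cdot>\<^sub>m ones_mat n)"
    unfolding gen_char_poly_def by (simp add: det_border_mat[of _ n] power2_eq_square minus_carrier_mat)
  thus ?thesis
    by (simp add: ones_bordered_det_minus_smult_ones det_minus_smult_ones gen_char_poly_eq_det_gen_char_mat)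
qed

lemma gen_char_poly_eq_imp_order_eq:
  assumes "gen_char_poly n E = gen_char_poly m F"
  shows "n = m"
proof -
  have "poly (char_poly (adj_mat n E - 0 \<cdot>\<^sub>m deg_mat n E - 0 \<cdot>\<^sub>m ones_mat n)) lam
      = poly (char_poly (adj_mat m F - 0 \<cdot>\<^sub>m deg_mat m F - 0 \<cdot>\<^sub>m ones_mat m)) lam" for lam
    using assms gen_char_poly_eq_poly_char_poly[of n E lam 0 0] gen_char_poly_eq_poly_char_poly[of m F lam 0 0]
    by metis
  hence "cospectral (adj_mat n E - 0 \<cdot>\<^sub>m deg_mat n E - 0 \<cdot>\<^sub>m ones_mat n)
      (adj_mat m F - 0 \<cdot>\<^sub>m deg_mat m F - 0 \<cdot>\<^sub>m ones_mat m)"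
    unfolding cospectral_def poly_eq_poly_eq_iff[symmetric] by (rule ext)
  thus ?thesis by (rule cospectral_dim_eq) auto
qed

lemma gen_char_poly_eq_iff:
  "gen_char_poly n E = gen_char_poly n F \<longleftrightarrow>
     (\<forall>lam x. det (gen_char_mat n E lam x) = det (gen_char_mat n F lam x) \<and>
              ones_bordered_det (gen_char_mat n E lam x) = ones_bordered_det (gen_char_mat n F lam x))"
  (is "_ \<longleftrightarrow> (\<forall>lam x. ?agree lam x)")
proof
  assume eq: "gen_char_poly n E = gen_char_poly n F"
  show "\<forall>lam x. ?agree lam x"
  proof (intro allI)
    fix lam x
    show "?agree lam x"
      using fun_cong[OF fun_cong[OF fun_cong[OF eq, of lam], of x], of 0]
        fun_cong[OF fun_cong[OF fun_cong[OF eq, of lam], of x], of 1]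
      by (simp add: gen_char_poly_eq_det_gen_char_mat)
  qed
qed (auto intro!: ext simp: gen_char_poly_eq_det_gen_char_mat)

text \<open>Both sides are polynomials in \<open>lam\<close>, so agreement off a single exceptional \<open>lam\<close> suffices.\<close>
lemma gen_char_poly_eqI_except:
  assumes "\<And>lam x. lam \<noteq> f x \<Longrightarrow>
    det (gen_char_mat n E lam x) = det (gen_char_mat n F lam x) \<and>
    ones_bordered_det (gen_char_mat n E lam x) = ones_bordered_det (gen_char_mat n F lam x)"
  shows "gen_char_poly n E = gen_char_poly n F"
proof (intro ext)
  fix lam x y
  have "char_poly (adj_mat n E - x \<cdot>\<^sub>m deg_mat n E - y \<cdot>\<^sub>m ones_mat n)
      = char_poly (adj_mat n F - x \<cdot>\<^sub>m deg_mat n F - y \<cdot>\<^sub>m ones_mat n)"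
    by (rule poly_eqI_except[of "f x"])
      (simp add: assms gen_char_poly_eq_poly_char_poly[symmetric] gen_char_poly_eq_det_gen_char_mat)
  thus "gen_char_poly n E lam x y = gen_char_poly n F lam x y"
    by (simp add: gen_char_poly_eq_poly_char_poly)
qed

lemma gen_char_poly_cone_eq_iff:
  "gen_char_poly (Suc n) (cone_graph n E) = gen_char_poly (Suc m) (cone_graph m F)
     \<longleftrightarrow> gen_char_poly n E = gen_char_poly m F"
proof
  assume cone: "gen_char_poly (Suc n) (cone_graph n E) = gen_char_poly (Suc m) (cone_graph m F)"
  have "n = m" using gen_char_poly_eq_imp_order_eq[OF cone] by simp
  with cone have cone': "gen_char_poly (Suc n) (cone_graph n E) = gen_char_poly (Suc n) (cone_graph n F)"
    by simp
  have "gen_char_poly n E = gen_char_poly n F"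
  proof (rule gen_char_poly_eqI_except[where f="\<lambda>x. x - x * real n - 1"])
    fix lam x assume lam: "lam \<noteq> x - x * real n - 1"
    define u where "u = lam - x + x * real n"
    let ?P = "det (gen_char_mat n E lam x)" and ?P' = "det (gen_char_mat n F lam x)"
    let ?T = "ones_bordered_det (gen_char_mat n E lam x)" and ?T' = "ones_bordered_det (gen_char_mat n F lam x)"
    have eval: "gen_char_poly (Suc n) (cone_graph n G) (lam - x) x y
        = (y - 1)^2 * ones_bordered_det (gen_char_mat n G lam x)
          + (u + y) * (det (gen_char_mat n G lam x) - y * ones_bordered_det (gen_char_mat n G lam x))"
      for G y unfolding gen_char_poly_cone by (simp add: gen_char_poly_eq_det_gen_char_mat u_def)
    have u: "u + 1 \<noteq> 0" using lam unfolding u_def by simp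
    have "?T + u * ?P = ?T' + u * ?P'"
      using eval[of E 0] eval[of F 0] cone' by simp
    moreover have diff: "?P - ?T = ?P' - ?T'"
      using eval[of E 1] eval[of F 1] cone' u by auto
    ultimately have "(u + 1) * ?P = (u + 1) * ?P'"
      by (simp add: algebra_simps)
    with u diff show "?P = ?P' \<and> ?T = ?T'" by simp
  qed
  with \<open>n = m\<close> show "gen_char_poly n E = gen_char_poly m F" by simp
next
  assume base: "gen_char_poly n E = gen_char_poly m F"
  have "n = m" using gen_char_poly_eq_imp_order_eq[OF base] .
  with base have agree: "\<forall>lam x. det (gen_char_mat n E lam x) = det (gen_char_mat n F lam x) \<and>
      ones_bordered_det (gen_char_mat n E lam x) = ones_bordered_det (gen_char_mat n F lam x)"
    using gen_char_poly_eq_iff by simp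
  with \<open>n = m\<close> show "gen_char_poly (Suc n) (cone_graph n E) = gen_char_poly (Suc m) (cone_graph m F)"
    unfolding fun_eq_iff gen_char_poly_cone by (simp add: agree gen_char_poly_eq_det_gen_char_mat)
qed

theorem corollary3p3:
  fixes n1 n2 :: nat and E1 E2 :: "nat \<Rightarrow> nat \<Rightarrow> bool"
  assumes "is_graph n1 E1" and "is_graph n2 E2"
  shows "((cospectral (adj_mat n1 E1) (adj_mat n2 E2) \<and>
           cospectral (adj_mat n1 (compl_graph E1)) (adj_mat n2 (compl_graph E2)))
          \<longleftrightarrow>
          (cospectral (adj_mat (n1+1) (cone_graph n1 E1)) (adj_mat (n2+1) (cone_graph n2 E2)) \<and>
           cospectral (adj_mat (n1+1) (compl_graph (cone_graph n1 E1)))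
                      (adj_mat (n2+1) (compl_graph (cone_graph n2 E2)))))
       \<and> ((cospectral (signless_lap n1 E1) (signless_lap n2 E2) \<and>
           cospectral (signless_lap n1 (compl_graph E1)) (signless_lap n2 (compl_graph E2)))
          \<longleftrightarrow>
          (cospectral (signless_lap (n1+1) (cone_graph n1 E1)) (signless_lap (n2+1) (cone_graph n2 E2)) \<and>
           cospectral (signless_lap (n1+1) (compl_graph (cone_graph n1 E1)))
                      (signless_lap (n2+1) (compl_graph (cone_graph n2 E2)))))
       \<and> (gen_char_poly n1 E1 = gen_char_poly n2 E2 \<longleftrightarrow>
          gen_char_poly (n1+1) (cone_graph n1 E1) = gen_char_poly (n2+1) (cone_graph n2 E2))"
  unfolding Suc_eq_plus1[symmetric]
  using cospectral_adj_mat_cone_iff[OF assms] cospectral_signless_lap_cone_iff[OF assms]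
    gen_char_poly_cone_eq_iff[of n1 E1 n2 E2]
  by simp

end
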